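(* For every $\lambda\in\Lambda^{\bullet}(n,r)$, the map $\mathrm{ro}:\mathrm{cb}(\lambda)\to\Lambda(n,r)_{\preceq\lambda}$, $A\mapsto\mathrm{ro}(A)$, is a bijection.
   Context: Let $n,r\ge 0$. $\Lambda(n,r)$ is the set of weak compositions $(\lambda_1,\dots,\lambda_n)$ of $r$ into $n$ nonnegative parts. $\Lambda^{\bullet}(n,r)$ is the set of $\lambda\in\Lambda(n,r)$ such that $\lambda_i=0$ implies $\lambda_j=0$ for all $j>i$. For an $n\times n$ matrix $A$, $\mathrm{ro}(A)$ and $\mathrm{co}(A)$ denote its row-sum and column-sum vectors. A column block diagonal matrix is a matrix $A=(a_{i,j})$ with nonnegative integer entries such that $a_{i,j}>0$ implies $a_{i',s}=0$ for all $i'\le i$ and $s>j$. $\mathrm{cb}(\lambda)$ is the set of $n\times n$ column block diagonal matrices $A$ with $\mathrm{co}(A)=\lambda$. For $\mu,\lambda\in\Lambda(n,r)$, $\mu$ is a refinement of $\lambda$, written $\mu\preceq\lambda$, if $\mu$ is obtained by subdividing the parts of $\lambda$ in order. Precisely, if $\lambda=(\lambda_1,\dots,\lambda_t,0,\dots,0)$ with $\lambda_1,\dots,\lambda_t>0$, then there are indices $1=i_1<i_2<\dots<i_{t+1}=n+1$ with $\lambda_k=\mu_{i_k}+\dots+\mu_{i_{k+1}-1}$ for $1\le k\le t$. $\Lambda(n,r)_{\preceq\lambda}=\{\mu\in\Lambda(n,r):\mu\preceq\lambda\}$. *)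

theory Defs
  imports Main
begin

text \<open>Conventions: indices are 0-based, i.e. the paper's index i corresponds to i-1 here.
  A vector of length n is a function nat => nat that vanishes outside {0..<n};
  an n x n matrix with nonnegative integer entries is a function nat => nat => nat
  that vanishes outside {0..<n} x {0..<n}.\<close>

definition vec_of :: "nat \<Rightarrow> (nat \<Rightarrow> nat) \<Rightarrow> bool" where
  "vec_of n v \<longleftrightarrow> (\<forall>i. n \<le> i \<longrightarrow> v i = 0)"

definition mat_of :: "nat \<Rightarrow> (nat \<Rightarrow> nat \<Rightarrow> nat) \<Rightarrow> bool" where
  "mat_of n A \<longleftrightarrow> (\<forall>i j. (n \<le> i \<or> n \<le> j) \<longrightarrow> A i j = 0)"

definition Lam :: "nat \<Rightarrow> nat \<Rightarrow> (nat \<Rightarrow> nat) set" where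
  "Lam n r = {v. vec_of n v \<and> (\<Sum>i<n. v i) = r}"

definition Lam_bullet :: "nat \<Rightarrow> nat \<Rightarrow> (nat \<Rightarrow> nat) set" where
  "Lam_bullet n r = {v \<in> Lam n r. \<forall>i j. i < j \<and> j < n \<and> v i = 0 \<longrightarrow> v j = 0}"

definition ro :: "nat \<Rightarrow> (nat \<Rightarrow> nat \<Rightarrow> nat) \<Rightarrow> nat \<Rightarrow> nat" where
  "ro n A = (\<lambda>i. \<Sum>j<n. A i j)"

definition co :: "nat \<Rightarrow> (nat \<Rightarrow> nat \<Rightarrow> nat) \<Rightarrow> nat \<Rightarrow> nat" where
  "co n A = (\<lambda>j. \<Sum>i<n. A i j)"

definition col_block_diag :: "nat \<Rightarrow> (nat \<Rightarrow> nat \<Rightarrow> nat) \<Rightarrow> bool" where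
  "col_block_diag n A \<longleftrightarrow> mat_of n A \<and>
     (\<forall>i<n. \<forall>j<n. 0 < A i j \<longrightarrow> (\<forall>i'\<le>i. \<forall>s. j < s \<and> s < n \<longrightarrow> A i' s = 0))"

definition cb :: "nat \<Rightarrow> (nat \<Rightarrow> nat) \<Rightarrow> (nat \<Rightarrow> nat \<Rightarrow> nat) set" where
  "cb n lam = {A. col_block_diag n A \<and> co n A = lam}"

definition refines :: "nat \<Rightarrow> (nat \<Rightarrow> nat) \<Rightarrow> (nat \<Rightarrow> nat) \<Rightarrow> bool" where
  "refines n mu lam \<longleftrightarrow>
     ((\<forall>k<n. lam k = 0) \<and> (\<forall>i<n. mu i = 0)) \<or>
     (\<exists>t idx. 0 < t \<and> t \<le> n \<and> (\<forall>k<t. 0 < lam k) \<and> (\<forall>k. t \<le> k \<and> k < n \<longrightarrow> lam k = 0) \<and>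
        idx 0 = 0 \<and> idx t = n \<and> (\<forall>k<t. idx k < idx (Suc k)) \<and>
        (\<forall>k<t. lam k = (\<Sum>i\<in>{idx k..<idx (Suc k)}. mu i)))"

definition Lam_refining :: "nat \<Rightarrow> nat \<Rightarrow> (nat \<Rightarrow> nat) \<Rightarrow> (nat \<Rightarrow> nat) set" where
  "Lam_refining n r lam = {mu \<in> Lam n r. refines n mu lam}"

end

theory Submission
  imports Defs
begin

text \<open>A column block diagonal matrix is a staircase: if \<open>A i j > 0\<close>, \<open>A i' j' > 0\<close> and
  \<open>j < j'\<close>, then \<open>i < i'\<close>. So every row has at most one nonzero entry, and the rows carrying
  column \<open>k\<close> form a contiguous block lying below the blocks of the earlier columns. Cutting the
  rows at the block boundaries exhibits \<open>ro A\<close> as a refinement of \<open>\<lambda> = co A\<close>; conversely a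
  refinement \<open>\<mu>\<close> of \<open>\<lambda>\<close> with boundaries \<open>idx\<close> is the row-sum vector of the matrix carrying
  \<open>\<mu>\<^sub>i\<close> in column \<open>k\<close> for the rows \<open>i\<close> of block \<open>k\<close>. Injectivity holds because the position of
  the nonzero entry of a row is read off the row sums: row \<open>i\<close> meets column \<open>j\<close> exactly when
  \<open>(\<Sum>k<j. \<lambda> k) \<le> (\<Sum>i'<i. \<mu> i') < (\<Sum>k\<le>j. \<lambda> k)\<close>.\<close>

lemma mat_of_pos_entry:
  assumes "mat_of n A" "0 < A i j"
  shows "i < n" and "j < n"
  using assms unfolding mat_of_def by (metis leI less_irrefl)+

lemma col_block_diag_row_less:
  assumes cbd: "col_block_diag n A" and pos: "0 < A i j" "0 < A i' j'" and "j < j'"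
  shows "i < i'"
proof (rule ccontr)
  assume "\<not> i < i'"
  have mat: "mat_of n A" using cbd unfolding col_block_diag_def by blast
  have "i < n" "j < n" "j' < n"
    using mat_of_pos_entry[OF mat pos(1)] mat_of_pos_entry(2)[OF mat pos(2)] by auto
  then have "A i' j' = 0"
    using cbd pos(1) \<open>j < j'\<close> \<open>\<not> i < i'\<close> unfolding col_block_diag_def by (meson not_less)
  with pos(2) show False by simp
qed

lemma ro_eq_entry:
  assumes "k < n" "\<And>j. j \<noteq> k \<Longrightarrow> A i j = 0"
  shows "ro n A i = A i k"
proof -
  have "ro n A i = (\<Sum>j<n. if j = k then A i k else 0)"
    unfolding ro_def using assms(2) by (intro sum.cong) auto
  with assms(1) show ?thesis by simp
qed

lemma ro_pos_entry:
  assumes "0 < ro n A i"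
  obtains j where "j < n" "0 < A i j"
  using assms unfolding ro_def by (metis lessThan_iff not_gr0 sum.neutral)

lemma col_block_diag_ro_eq_entry:
  assumes cbd: "col_block_diag n A" and pos: "0 < A i j"
  shows "ro n A i = A i j"
proof (rule ro_eq_entry)
  have "mat_of n A" using cbd unfolding col_block_diag_def by blast
  then show "j < n" using pos by (rule mat_of_pos_entry)
  show "A i j' = 0" if "j' \<noteq> j" for j'
  proof (rule ccontr)
    assume "A i j' \<noteq> 0"
    then have pos': "0 < A i j'" by simp
    from that consider "j < j'" | "j' < j" by linarith
    then show False
      using col_block_diag_row_less[OF cbd pos pos'] col_block_diag_row_less[OF cbd pos' pos]
      by cases auto
  qed
qed

lemma entry_le_co: "i < n \<Longrightarrow> A i j \<le> co n A j"
  unfolding co_def by (rule member_le_sum) auto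

lemma cb_pos_entry_prefix_sums:
  assumes A: "A \<in> cb n lam" and pos: "0 < A i j"
  shows "(\<Sum>k<j. lam k) \<le> (\<Sum>i'<i. ro n A i')"
    and "(\<Sum>i'<i. ro n A i') < (\<Sum>k<Suc j. lam k)"
proof -
  have cbd: "col_block_diag n A" and co: "\<And>k. lam k = (\<Sum>i'<n. A i' k)"
    using A unfolding cb_def co_def by auto
  have mat: "mat_of n A" using cbd unfolding col_block_diag_def by blast
  have "i < n" "j < n" using mat_of_pos_entry[OF mat pos] by auto
  define above where "above k = (\<Sum>i'<i. A i' k)" for k
  have above_left: "above k = lam k" if "k < j" for k
  proof -
    have "A i' k = 0" if "i' \<in> {..<n} - {..<i}" for i'
      using col_block_diag_row_less[OF cbd _ pos \<open>k < j\<close>, of i'] that by auto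
    then show ?thesis
      unfolding above_def co using \<open>i < n\<close> by (intro sum.mono_neutral_right[symmetric]) auto
  qed
  have above_right: "above k = 0" if "j < k" for k
  proof -
    have "A i' k = 0" if "i' < i" for i'
      using col_block_diag_row_less[OF cbd pos _ \<open>j < k\<close>, of i'] that by (meson gr0I less_asym)
    then show ?thesis unfolding above_def by simp
  qed
  have "above j < (\<Sum>i'<Suc i. A i' j)" unfolding above_def using pos by simp
  also have "\<dots> \<le> lam j" unfolding co using \<open>i < n\<close> by (intro sum_mono2) auto
  finally have above_j: "above j < lam j" .
  have "(\<Sum>i'<i. ro n A i') = (\<Sum>k<n. above k)"
    unfolding ro_def above_def by (rule sum.swap)
  also have "\<dots> = (\<Sum>k<Suc j. above k)"
    using above_right \<open>j < n\<close> by (intro sum.mono_neutral_right) auto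
  also have "\<dots> = (\<Sum>k<j. lam k) + above j"
    using above_left by simp
  finally have "(\<Sum>i'<i. ro n A i') = (\<Sum>k<j. lam k) + above j" .
  then show "(\<Sum>k<j. lam k) \<le> (\<Sum>i'<i. ro n A i')"
    and "(\<Sum>i'<i. ro n A i') < (\<Sum>k<Suc j. lam k)"
    using above_j by simp_all
qed

lemma cb_entry_eq_prefix_sums:
  assumes A: "A \<in> cb n lam"
  shows "A i j = (if 0 < ro n A i \<and> (\<Sum>k<j. lam k) \<le> (\<Sum>i'<i. ro n A i') \<and>
                     (\<Sum>i'<i. ro n A i') < (\<Sum>k<Suc j. lam k) then ro n A i else 0)"
proof (cases "0 < A i j")
  case True
  have "col_block_diag n A" using A unfolding cb_def by blast
  then have "ro n A i = A i j" using True by (rule col_block_diag_ro_eq_entry)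
  with True show ?thesis using cb_pos_entry_prefix_sums[OF A True] by simp
next
  case False
  have not_in_j: "\<not> (0 < ro n A i \<and> (\<Sum>k<j. lam k) \<le> (\<Sum>i'<i. ro n A i') \<and>
                     (\<Sum>i'<i. ro n A i') < (\<Sum>k<Suc j. lam k))"
  proof (intro notI, elim conjE)
    assume ro_pos: "0 < ro n A i" and lower: "(\<Sum>k<j. lam k) \<le> (\<Sum>i'<i. ro n A i')"
      and upper: "(\<Sum>i'<i. ro n A i') < (\<Sum>k<Suc j. lam k)"
    obtain j' where pos': "0 < A i j'"
      using ro_pos_entry[OF ro_pos] by blast
    with False have "j \<noteq> j'" by auto
    have prefix_mono: "(\<Sum>k<a. lam k) \<le> (\<Sum>k<b. lam k)" if "a \<le> b" for a b
      using that by (intro sum_mono2) auto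
    note in_j' = cb_pos_entry_prefix_sums[OF A pos']
    from \<open>j \<noteq> j'\<close> consider "Suc j \<le> j'" | "Suc j' \<le> j" by linarith
    then show False
    proof cases
      case 1
      with prefix_mono[OF 1] upper in_j' show False by linarith
    next
      case 2
      with prefix_mono[OF 2] lower in_j' show False by linarith
    qed
  qed
  show ?thesis unfolding if_not_P[OF not_in_j] using False by simp
qed

lemma inj_on_ro_cb: "inj_on (ro n) (cb n lam)"
proof (rule inj_onI)
  fix A B assume A: "A \<in> cb n lam" and B: "B \<in> cb n lam" and ro_eq: "ro n A = ro n B"
  show "A = B"
  proof (intro ext)
    fix i j
    show "A i j = B i j"
      using cb_entry_eq_prefix_sums[OF A, of i j] cb_entry_eq_prefix_sums[OF B, of i j] ro_eq by simp
  qed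
qed

lemma incr_chain_less:
  assumes "\<forall>k<t. idx k < (idx (Suc k) :: nat)" "a < b" "b \<le> t"
  shows "idx a < idx b"
  using assms by (auto intro: lift_Suc_mono_less_ivl[of "{..<t}"])

lemma incr_chain_le:
  assumes "\<forall>k<t. idx k < (idx (Suc k) :: nat)" "a \<le> b" "b \<le> t"
  shows "idx a \<le> idx b"
  using incr_chain_less[OF assms(1), of a b] assms(2,3) by (cases "a = b") auto

lemma incr_chain_interval_unique:
  assumes inc: "\<forall>k<t. idx k < (idx (Suc k) :: nat)" and "j < t" "k < t"
    and "idx j \<le> i" "i < idx (Suc j)" "idx k \<le> i" "i < idx (Suc k)"
  shows "j = k"
proof (rule ccontr)
  assume "j \<noteq> k"
  then consider "Suc j \<le> k" | "Suc k \<le> j" by linarith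
  then show False
    using incr_chain_le[OF inc, of "Suc j" k] incr_chain_le[OF inc, of "Suc k" j] assms(2-7)
    by cases auto
qed

lemma incr_chain_interval_exists:
  assumes "\<forall>k<t. idx k < (idx (Suc k) :: nat)" "idx 0 \<le> i" "i < idx t"
  obtains j where "j < t" "idx j \<le> i" "i < idx (Suc j)"
  using assms
proof (induction t)
  case 0
  then show ?case by simp
next
  case (Suc t)
  show ?case
  proof (cases "i < idx t")
    case True
    with Suc show ?thesis by (metis less_Suc_eq)
  next
    case False
    with Suc.prems show ?thesis by (metis lessI not_less)
  qed
qed

definition block_mat :: "nat \<Rightarrow> (nat \<Rightarrow> nat) \<Rightarrow> (nat \<Rightarrow> nat) \<Rightarrow> nat \<Rightarrow> nat \<Rightarrow> nat" where
  "block_mat t idx mu = (\<lambda>i j. if j < t \<and> idx j \<le> i \<and> i < idx (Suc j) then mu i else 0)"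

lemma block_mat_col_block_diag:
  assumes inc: "\<forall>k<t. idx k < idx (Suc k)" and "t \<le> n" "idx t \<le> n"
  shows "col_block_diag n (block_mat t idx mu)"
  unfolding col_block_diag_def
proof (intro conjI allI impI ballI)
  have "idx (Suc j) \<le> n" if "j < t" for j
    using incr_chain_le[OF inc, of "Suc j" t] that assms(3) by simp
  with \<open>t \<le> n\<close> show "mat_of n (block_mat t idx mu)"
    unfolding mat_of_def block_mat_def by fastforce
next
  fix i j i' s
  assume "0 < block_mat t idx mu i j" "i' \<le> i" "j < s \<and> s < n"
  then show "block_mat t idx mu i' s = 0"
    using incr_chain_le[OF inc, of "Suc j" s] unfolding block_mat_def
    by (auto split: if_splits)
qed

lemma co_block_mat:
  assumes inc: "\<forall>k<t. idx k < idx (Suc k)" and "idx t \<le> n"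
  shows "co n (block_mat t idx mu) j = (if j < t then \<Sum>i\<in>{idx j..<idx (Suc j)}. mu i else 0)"
proof (cases "j < t")
  case True
  have "{idx j..<idx (Suc j)} \<subseteq> {..<n}"
    using incr_chain_le[OF inc, of "Suc j" t] True assms(2) by auto
  then have "co n (block_mat t idx mu) j = (\<Sum>i\<in>{..<n} \<inter> {idx j..<idx (Suc j)}. mu i)"
    unfolding co_def block_mat_def using True by (simp add: sum.inter_restrict)
  also have "\<dots> = (\<Sum>i\<in>{idx j..<idx (Suc j)}. mu i)"
    using \<open>{idx j..<idx (Suc j)} \<subseteq> {..<n}\<close> by (simp add: Int_absorb1)
  finally show ?thesis using True by simp
qed (simp add: co_def block_mat_def)

lemma ro_block_mat:
  assumes inc: "\<forall>k<t. idx k < idx (Suc k)" and "t \<le> n" "idx 0 = 0" "idx t = n"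
    and "vec_of n mu"
  shows "ro n (block_mat t idx mu) = mu"
proof
  fix i
  show "ro n (block_mat t idx mu) i = mu i"
  proof (cases "i < n")
    case True
    then obtain j where j: "j < t" "idx j \<le> i" "i < idx (Suc j)"
      using incr_chain_interval_exists[OF inc, of i] assms(3,4) by auto
    have "ro n (block_mat t idx mu) i = block_mat t idx mu i j"
    proof (rule ro_eq_entry)
      show "j < n" using j \<open>t \<le> n\<close> by simp
      show "block_mat t idx mu i j' = 0" if "j' \<noteq> j" for j'
        using incr_chain_interval_unique[OF inc, of j' j i] j that unfolding block_mat_def by auto
    qed
    with j show ?thesis unfolding block_mat_def by simp
  next
    case False
    have "mat_of n (block_mat t idx mu)"
      using block_mat_col_block_diag[OF inc \<open>t \<le> n\<close>] assms(4) unfolding col_block_diag_def by simp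
    with False \<open>vec_of n mu\<close> show ?thesis unfolding mat_of_def vec_of_def ro_def by simp
  qed
qed

lemma block_mat_in_cb:
  assumes inc: "\<forall>k<t. idx k < idx (Suc k)" and "t \<le> n" "idx t = n"
    and "vec_of n lam" "\<forall>k. t \<le> k \<and> k < n \<longrightarrow> lam k = 0"
    and "\<forall>k<t. lam k = (\<Sum>i\<in>{idx k..<idx (Suc k)}. mu i)"
  shows "block_mat t idx mu \<in> cb n lam"
proof -
  have "co n (block_mat t idx mu) k = lam k" for k
    using co_block_mat[OF inc] assms(3-6) unfolding vec_of_def by (metis le_refl not_le)
  then show ?thesis
    using block_mat_col_block_diag[OF inc \<open>t \<le> n\<close>] assms(3) unfolding cb_def by auto
qed

lemma Lam_refining_subset_image_ro:
  assumes lam: "lam \<in> Lam n r"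
  shows "Lam_refining n r lam \<subseteq> ro n ` cb n lam"
proof
  fix mu assume "mu \<in> Lam_refining n r lam"
  then have vec_mu: "vec_of n mu" and "refines n mu lam"
    unfolding Lam_refining_def Lam_def by auto
  have vec_lam: "vec_of n lam" using lam unfolding Lam_def by auto
  from \<open>refines n mu lam\<close> consider
      (zero) "\<forall>k<n. lam k = 0" "\<forall>i<n. mu i = 0"
    | (blocks) t idx where "t \<le> n" "\<forall>k. t \<le> k \<and> k < n \<longrightarrow> lam k = 0"
        "idx 0 = 0" "idx t = n" "\<forall>k<t. idx k < idx (Suc k)"
        "\<forall>k<t. lam k = (\<Sum>i\<in>{idx k..<idx (Suc k)}. mu i)"
    unfolding refines_def by blast
  then show "mu \<in> ro n ` cb n lam"
  proof cases
    case zero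
    with vec_lam vec_mu have "lam = (\<lambda>_. 0)" "mu = (\<lambda>_. 0)"
      unfolding vec_of_def by (metis not_le)+
    then have "(\<lambda>_ _. 0) \<in> cb n lam" "ro n (\<lambda>_ _. 0) = mu"
      unfolding cb_def col_block_diag_def mat_of_def co_def ro_def by auto
    then show ?thesis by (metis image_eqI)
  next
    case blocks
    then have "block_mat t idx mu \<in> cb n lam" "ro n (block_mat t idx mu) = mu"
      using block_mat_in_cb[OF blocks(5,1,4) vec_lam] ro_block_mat[OF blocks(5,1,3,4) vec_mu]
      by simp_all
    then show ?thesis by (metis image_eqI)
  qed
qed

lemma Lam_bullet_support:
  assumes "lam \<in> Lam_bullet n r"
  obtains t where "t \<le> n" "\<And>k. k < t \<Longrightarrow> 0 < lam k" "\<And>k. t \<le> k \<Longrightarrow> lam k = 0"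
proof
  define t where "t = (LEAST k. k = n \<or> lam k = 0)"
  have vec: "vec_of n lam" and bullet: "\<And>i j. i < j \<Longrightarrow> j < n \<Longrightarrow> lam i = 0 \<Longrightarrow> lam j = 0"
    using assms unfolding Lam_bullet_def Lam_def by auto
  show "t \<le> n" unfolding t_def by (rule Least_le) simp
  show "0 < lam k" if "k < t" for k
    using not_less_Least[of k "\<lambda>k. k = n \<or> lam k = 0"] that unfolding t_def by auto
  show "lam k = 0" if "t \<le> k" for k
  proof -
    have "t = n \<or> lam t = 0" unfolding t_def by (rule LeastI[of _ n]) simp
    with that vec bullet show ?thesis unfolding vec_of_def
      by (metis le_eq_less_or_eq not_le)
  qed
qed

definition block_start :: "(nat \<Rightarrow> nat \<Rightarrow> nat) \<Rightarrow> nat \<Rightarrow> nat" where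
  "block_start A k = (LEAST i. \<forall>i'\<ge>i. \<forall>j<k. A i' j = 0)"

lemma block_start_le:
  assumes "mat_of n A"
  shows "block_start A k \<le> n"
  unfolding block_start_def using assms by (intro Least_le) (simp add: mat_of_def)

lemma block_start_zero_below:
  assumes "mat_of n A" "block_start A k \<le> i" "j < k"
  shows "A i j = 0"
proof -
  have "\<forall>i'\<ge>block_start A k. \<forall>j<k. A i' j = 0"
    unfolding block_start_def using assms(1)
    by (intro LeastI[of "\<lambda>i. \<forall>i'\<ge>i. \<forall>j<k. A i' j = 0" n]) (simp add: mat_of_def)
  with assms(2,3) show ?thesis by blast
qed

lemma col_block_diag_block_start_le:
  assumes cbd: "col_block_diag n A" and pos: "0 < A i j" and "k \<le> j"
  shows "block_start A k \<le> i"
  unfolding block_start_def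
proof (rule Least_le, intro allI impI)
  fix i' j' assume "i \<le> i'" "j' < k"
  show "A i' j' = 0"
  proof (rule ccontr)
    assume "A i' j' \<noteq> 0"
    with \<open>j' < k\<close> \<open>k \<le> j\<close> have "i' < i"
      by (intro col_block_diag_row_less[OF cbd _ pos]) auto
    with \<open>i \<le> i'\<close> show False by simp
  qed
qed

lemma cb_entry_zero:
  assumes "A \<in> cb n lam" "lam j = 0"
  shows "A i j = 0"
proof (cases "i < n")
  case True
  then show ?thesis using entry_le_co[OF True, of A j] assms unfolding cb_def by simp
next
  case False
  with assms(1) show ?thesis unfolding cb_def col_block_diag_def mat_of_def by simp
qed

text \<open>The last boundary is \<open>n\<close> rather than \<open>block_start A t\<close>, which is smaller when the bottom
  rows of \<open>A\<close> vanish.\<close>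

definition block_bounds :: "nat \<Rightarrow> nat \<Rightarrow> (nat \<Rightarrow> nat \<Rightarrow> nat) \<Rightarrow> nat \<Rightarrow> nat" where
  "block_bounds n t A k = (if k < t then block_start A k else n)"

lemma block_bounds_le: "mat_of n A \<Longrightarrow> block_bounds n t A k \<le> n"
  unfolding block_bounds_def using block_start_le by simp

lemma col_block_diag_pos_entry_in_block:
  assumes cbd: "col_block_diag n A" and "k < t" and pos: "0 < A i k"
  shows "block_bounds n t A k \<le> i" and "i < block_bounds n t A (Suc k)"
proof -
  have mat: "mat_of n A" using cbd unfolding col_block_diag_def by blast
  show "block_bounds n t A k \<le> i"
    using col_block_diag_block_start_le[OF cbd pos] \<open>k < t\<close> unfolding block_bounds_def by simp
  show "i < block_bounds n t A (Suc k)"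
  proof (cases "Suc k < t")
    case True
    have "\<not> block_start A (Suc k) \<le> i"
      using block_start_zero_below[OF mat _ lessI] pos by (metis less_irrefl)
    with True show ?thesis unfolding block_bounds_def by simp
  next
    case False
    then show ?thesis using mat_of_pos_entry(1)[OF mat pos] unfolding block_bounds_def by simp
  qed
qed

lemma cb_block_bounds_less:
  assumes A: "A \<in> cb n lam" and "k < t" "0 < lam k"
  shows "block_bounds n t A k < block_bounds n t A (Suc k)"
proof -
  have cbd: "col_block_diag n A" and "lam k = (\<Sum>i<n. A i k)"
    using A unfolding cb_def co_def by auto
  with \<open>0 < lam k\<close> obtain i where "0 < A i k" by (metis gr0I sum.neutral)
  from col_block_diag_pos_entry_in_block[OF cbd \<open>k < t\<close> this] show ?thesis by linarith
qed

lemma cb_entry_outside_block_column: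
  assumes A: "A \<in> cb n lam" and support: "\<And>j. t \<le> j \<Longrightarrow> lam j = 0" and "k < t"
    and block: "block_bounds n t A k \<le> i" "i < block_bounds n t A (Suc k)" and "j \<noteq> k"
  shows "A i j = 0"
proof -
  have cbd: "col_block_diag n A" using A unfolding cb_def by blast
  then have mat: "mat_of n A" unfolding col_block_diag_def by blast
  consider "j < k" | "Suc k \<le> j" "j < t" | "t \<le> j" using \<open>j \<noteq> k\<close> by linarith
  then show ?thesis
  proof cases
    case 1
    with block(1) \<open>k < t\<close> show ?thesis
      using block_start_zero_below[OF mat] unfolding block_bounds_def by simp
  next
    case 2
    then have "block_bounds n t A (Suc k) = block_start A (Suc k)"
      unfolding block_bounds_def by simp
    with block(2) 2 show ?thesis
      using col_block_diag_block_start_le[OF cbd, of i j "Suc k"] by (metis leD not_gr0)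
  next
    case 3
    then show ?thesis using cb_entry_zero[OF A support] by simp
  qed
qed

lemma cb_block_sum:
  assumes A: "A \<in> cb n lam" and support: "\<And>j. t \<le> j \<Longrightarrow> lam j = 0" and "k < t" "t \<le> n"
  shows "lam k = (\<Sum>i\<in>{block_bounds n t A k..<block_bounds n t A (Suc k)}. ro n A i)"
proof -
  have cbd: "col_block_diag n A" and co: "lam k = (\<Sum>i<n. A i k)"
    using A unfolding cb_def co_def by auto
  then have mat: "mat_of n A" unfolding col_block_diag_def by blast
  let ?block = "{block_bounds n t A k..<block_bounds n t A (Suc k)}"
  have "A i k = 0" if "i \<notin> ?block" for i
    using col_block_diag_pos_entry_in_block[OF cbd \<open>k < t\<close>, of i] that
    by (meson atLeastLessThan_iff not_gr0)
  then have "lam k = (\<Sum>i\<in>?block. A i k)"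
    unfolding co using block_bounds_le[OF mat, of t "Suc k"] by (intro sum.mono_neutral_right) auto
  also have "\<dots> = (\<Sum>i\<in>?block. ro n A i)"
    using cb_entry_outside_block_column[OF A support \<open>k < t\<close>] \<open>k < t\<close> \<open>t \<le> n\<close>
    by (intro sum.cong refl ro_eq_entry[symmetric]) auto
  finally show ?thesis .
qed

lemma cb_ro_refines:
  assumes lam: "lam \<in> Lam_bullet n r" and A: "A \<in> cb n lam"
  shows "refines n (ro n A) lam"
proof -
  obtain t where t: "t \<le> n" "\<And>k. k < t \<Longrightarrow> 0 < lam k" "\<And>k. t \<le> k \<Longrightarrow> lam k = 0"
    using Lam_bullet_support[OF lam] by blast
  show ?thesis
  proof (cases "t = 0")
    case True
    then have "ro n A i = 0" for i unfolding ro_def using cb_entry_zero[OF A t(3)] by simp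
    with True t(3) show ?thesis unfolding refines_def by simp
  next
    case False
    let ?idx = "block_bounds n t A"
    have "?idx 0 = 0" "?idx t = n"
      unfolding block_bounds_def block_start_def using False by auto
    with False t cb_block_bounds_less[OF A] cb_block_sum[OF A t(3) _ t(1)] show ?thesis
      unfolding refines_def by (intro disjI2 exI[of _ t] exI[of _ ?idx]) auto
  qed
qed

lemma image_ro_cb_subset_Lam_refining:
  assumes lam: "lam \<in> Lam_bullet n r"
  shows "ro n ` cb n lam \<subseteq> Lam_refining n r lam"
proof
  fix mu assume "mu \<in> ro n ` cb n lam"
  then obtain A where A: "A \<in> cb n lam" and mu: "mu = ro n A" by blast
  have "mat_of n A" and co: "co n A = lam" using A unfolding cb_def col_block_diag_def by auto
  then have "vec_of n mu" unfolding mu vec_of_def mat_of_def ro_def by simp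
  moreover have "(\<Sum>i<n. mu i) = r"
  proof -
    have "(\<Sum>i<n. mu i) = (\<Sum>j<n. co n A j)" unfolding mu ro_def co_def by (rule sum.swap)
    with co lam show ?thesis unfolding Lam_bullet_def Lam_def by simp
  qed
  ultimately show "mu \<in> Lam_refining n r lam"
    using cb_ro_refines[OF lam A] unfolding Lam_refining_def Lam_def mu by simp
qed

theorem mainTheorem2:
  fixes n r :: nat and lam :: "nat \<Rightarrow> nat"
  assumes "lam \<in> Lam_bullet n r"
  shows "bij_betw (ro n) (cb n lam) (Lam_refining n r lam)"
proof -
  have "lam \<in> Lam n r" using assms unfolding Lam_bullet_def by simp
  then have "Lam_refining n r lam \<subseteq> ro n ` cb n lam" by (rule Lam_refining_subset_image_ro)
  with image_ro_cb_subset_Lam_refining[OF assms] inj_on_ro_cb show ?thesis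
    unfolding bij_betw_def by blast
qed

end
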